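(* Let $h$ be the two-dimensional Euclid's hat, let $0<\tilde s<s$ and $x_0\in\mathbb{R}^2$, and set $$\Delta(s,\tilde s,x_0,x_1,x_2)=\left(h(|x_0-x_1|/s)-h(|x_0-x_2|/s)\right)h(|x_1-x_2|/\tilde s).$$ Then $$\int_{\mathbb{R}^2\times\mathbb{R}^2}\left|\Delta(s,\tilde s,x_0,x_1,x_2)\right|dx_1\,dx_2\le\frac{\pi^2}{8}\,\tilde s^{\,3}s .$$
   Context: The Euclid's hat is $h:[0,\infty)\to[0,1]$, $h(w)=\frac{2}{\pi}(\arccos w-w\sqrt{1-w^2})$ for $0\le w\le1$, $h(w)=0$ for $w>1$; equivalently $h(|x|/s)=\frac{4}{\pi s^2}(\chi_{s/2}\ast\chi_{s/2})(x)$ where $\chi_r$ is the indicator of the disc of radius $r$ centered at $0$ in $\mathbb{R}^2$. *)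

theory Defs
  imports "HOL-Analysis.Analysis"
begin

definition euclid_hat :: "real \<Rightarrow> real" where
  "euclid_hat w = (if 0 \<le> w \<and> w \<le> 1
     then 2 / pi * (arccos w - w * sqrt (1 - w\<^sup>2)) else 0)"

definition hat_Delta :: "real \<Rightarrow> real \<Rightarrow> real^2 \<Rightarrow> real^2 \<Rightarrow> real^2 \<Rightarrow> real" where
  "hat_Delta s s' x0 x1 x2 =
     (euclid_hat (norm (x0 - x1) / s) - euclid_hat (norm (x0 - x2) / s))
       * euclid_hat (norm (x1 - x2) / s')"

end

theory Submission
  imports Defs
begin

text \<open>Substituting \<open>y = x\<^sub>1 - x\<^sub>2\<close> and \<open>z = x\<^sub>2 - x\<^sub>0\<close> turns the integral into
  \<open>\<integral> h(|y|/s') \<integral> |h(|z + y|/s) - h(|z|/s)| dz dy\<close>. Writing the inner difference as an integral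
  of the radial slope of \<open>h(|\<cdot>|/s)\<close> along the segment from \<open>z\<close> to \<open>z + y\<close> and applying Fubini,
  the inner integral is at most \<open>|y|\<close> times the \<open>L\<^sup>1\<close> norm of that slope, which in polar
  coordinates is \<open>\<integral>\<^sub>0\<^sup>s 2\<pi>r \<cdot> 4/(\<pi>s) \<surd>(1 - r\<^sup>2/s\<^sup>2) dr = 8s/3\<close>. Polar coordinates also give
  \<open>\<integral> h(|y|/s') |y| dy = 16s'\<^sup>3/45\<close>, so the integral is at most \<open>128/135 \<cdot> s'\<^sup>3 s \<le> \<pi>\<^sup>2/8 \<cdot> s'\<^sup>3 s\<close>.\<close>

definition hat_formula :: "real \<Rightarrow> real" where
  "hat_formula w = 2 / pi * (arccos w - w * sqrt (1 - w\<^sup>2))"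

text \<open>Unlike \<open>euclid_hat\<close>, which jumps from 0 to 1 at the origin, this extension is continuous.\<close>
definition hat_ext :: "real \<Rightarrow> real" where
  "hat_ext w = hat_formula (max 0 (min w 1))"

lemma euclid_hat_eq_hat_ext: "0 \<le> w \<Longrightarrow> euclid_hat w = hat_ext w"
  by (auto simp: euclid_hat_def hat_ext_def hat_formula_def max_def min_def)

lemma hat_ext_eq_0: "1 \<le> w \<Longrightarrow> hat_ext w = 0"
  by (simp add: hat_ext_def hat_formula_def)

lemma continuous_on_hat_formula: "continuous_on {0..1} hat_formula"
  unfolding hat_formula_def by (intro continuous_intros) auto

lemma continuous_hat_ext: "continuous_on UNIV hat_ext"
  unfolding hat_ext_def
  by (rule continuous_on_compose2[OF continuous_on_hat_formula]) (auto intro!: continuous_intros)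

lemma borel_measurable_hat_ext[measurable]: "hat_ext \<in> borel_measurable borel"
  using continuous_hat_ext by (rule borel_measurable_continuous_onI)

lemma hat_formula_has_real_derivative:
  assumes "0 < w" "w < 1"
  shows "(hat_formula has_real_derivative - 4 / pi * sqrt (1 - w\<^sup>2)) (at w)"
proof -
  define q where "q = sqrt (1 - w\<^sup>2)"
  have "w\<^sup>2 < 1" using assms by (simp add: abs_square_less_1)
  then have q: "0 < q" "w\<^sup>2 = 1 - q\<^sup>2" by (simp_all add: q_def)
  have "(hat_formula has_real_derivative
      2 / pi * (inverse (- q) - (q + w * (inverse q / 2 * - (2 * w))))) (at w)"
    unfolding hat_formula_def q_def using assms \<open>w\<^sup>2 < 1\<close>
    by (auto intro!: derivative_eq_intros DERIV_arccos)
  moreover have "2 / pi * (inverse (- q) - (q + w * (inverse q / 2 * - (2 * w)))) = - 4 / pi * q"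
    using q by (simp add: field_simps power2_eq_square) algebra
  ultimately show ?thesis by (simp add: q_def)
qed

lemma hat_formula_has_real_derivative_chain[derivative_intros]:
  assumes "(g has_real_derivative g') (at x within S)" "0 < g x" "g x < 1"
  shows "((\<lambda>x. hat_formula (g x)) has_real_derivative - 4 / pi * sqrt (1 - (g x)\<^sup>2) * g')
           (at x within S)"
  using DERIV_chain2[OF hat_formula_has_real_derivative[OF assms(2,3)] assms(1)] .

definition hat_slope :: "real \<Rightarrow> real \<Rightarrow> real" where
  "hat_slope s r = 4 / (pi * s) * sqrt (max 0 (1 - (r / s)\<^sup>2))"

lemma hat_slope_nonneg: "0 < s \<Longrightarrow> 0 \<le> hat_slope s r"
  by (simp add: hat_slope_def)

lemma borel_measurable_hat_slope[measurable]: "hat_slope s \<in> borel_measurable borel"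
  unfolding hat_slope_def by measurable

lemma hat_slope_eq_0:
  assumes "0 < s" "s \<le> r"
  shows "hat_slope s r = 0"
proof -
  have "1 \<le> (r / s)\<^sup>2" using assms by (simp add: one_le_power)
  then show ?thesis by (simp add: hat_slope_def)
qed

lemma hat_slope_antimono:
  assumes "0 < s" "0 \<le> u" "u \<le> v"
  shows "hat_slope s v \<le> hat_slope s u"
proof -
  have "(u / s)\<^sup>2 \<le> (v / s)\<^sup>2" using assms by (intro power_mono divide_right_mono) auto
  then have "max 0 (1 - (v / s)\<^sup>2) \<le> max 0 (1 - (u / s)\<^sup>2)" by simp
  then show ?thesis unfolding hat_slope_def using assms by (intro mult_left_mono) auto
qed

lemma hat_ext_has_real_derivative:
  assumes s: "0 < s" and r: "0 < r" "r \<noteq> s"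
  shows "((\<lambda>r. - hat_ext (r / s)) has_real_derivative hat_slope s r) (at r)"
proof (cases "r < s")
  case True
  have "(r / s)\<^sup>2 < 1" using True s r by (simp add: abs_square_less_1)
  then have "((\<lambda>r. - hat_formula (r / s)) has_real_derivative
      - (- 4 / pi * sqrt (1 - (r / s)\<^sup>2) * (1 / s))) (at r)"
    using True s r by (auto intro!: derivative_eq_intros)
  moreover have "- (- 4 / pi * sqrt (1 - (r / s)\<^sup>2) * (1 / s)) = hat_slope s r"
    using \<open>(r / s)\<^sup>2 < 1\<close> by (simp add: hat_slope_def)
  ultimately have "((\<lambda>r. - hat_formula (r / s)) has_real_derivative hat_slope s r) (at r)"
    by simp
  then show ?thesis
    by (rule has_field_derivative_transform_within_open[where S = "{0<..<s}"])
       (use True r s in \<open>auto simp: hat_ext_def\<close>)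
next
  case False
  then have "hat_slope s r = 0" using s by (simp add: hat_slope_eq_0)
  have "((\<lambda>r. 0) has_real_derivative 0) (at r)" by simp
  then show ?thesis
    unfolding \<open>hat_slope s r = 0\<close>
    by (rule has_field_derivative_transform_within_open[where S = "{s<..}"])
       (use False r s in \<open>auto simp: hat_ext_eq_0 hat_slope_eq_0\<close>)
qed

lemma has_integral_hat_slope:
  assumes s: "0 < s" and pq: "0 \<le> p" "p \<le> q"
  shows "(hat_slope s has_integral hat_ext (p / s) - hat_ext (q / s)) {p..q}"
proof -
  have "(hat_slope s has_integral (- hat_ext (q / s)) - (- hat_ext (p / s))) {p..q}"
  proof (rule fundamental_theorem_of_calculus_interior_strong[of "{s}"])
    show "continuous_on {p..q} (\<lambda>r. - hat_ext (r / s))"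
      using s by (intro continuous_intros continuous_on_compose2[OF continuous_hat_ext]) auto
    show "((\<lambda>r. - hat_ext (r / s)) has_vector_derivative hat_slope s r) (at r)"
      if "r \<in> {p<..<q} - {s}" for r
      using that pq hat_ext_has_real_derivative[OF s, of r]
      by (simp add: has_real_derivative_iff_has_vector_derivative)
  qed (use pq in auto)
  then show ?thesis by simp
qed

lemma hat_ext_antimono:
  assumes "0 \<le> p" "p \<le> q"
  shows "hat_ext q \<le> hat_ext p"
  using has_integral_nonneg[OF has_integral_hat_slope[of 1 p q]] assms hat_slope_nonneg[of 1]
  by auto

lemma hat_ext_nonneg: "0 \<le> hat_ext w"
proof -
  have "hat_ext w = hat_ext (max 0 (min w 1))" by (simp add: hat_ext_def)
  also have "\<dots> \<ge> hat_ext 1" by (rule hat_ext_antimono) auto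
  finally show ?thesis by (simp add: hat_ext_eq_0)
qed

lemma norm_segment_le:
  fixes a b :: "'a::real_normed_vector"
  assumes "0 \<le> t" "t \<le> 1"
  shows "norm (a + t *\<^sub>R (b - a)) \<le> norm a + t * (norm b - norm a)"
proof -
  have "norm (a + t *\<^sub>R (b - a)) = norm ((1 - t) *\<^sub>R a + t *\<^sub>R b)"
    by (simp add: algebra_simps)
  also have "\<dots> \<le> (1 - t) * norm a + t * norm b"
    using norm_triangle_ineq[of "(1 - t) *\<^sub>R a" "t *\<^sub>R b"] assms by simp
  finally show ?thesis by (simp add: algebra_simps)
qed

text \<open>The difference is the integral of the slope over \<open>[|a|, |b|]\<close>; reparametrised over \<open>[0, 1]\<close>,
  it is dominated by the slope along the segment because \<open>|a + t(b - a)| \<le> |a| + t(|b| - |a|)\<close>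
  and the slope is antitone.\<close>
lemma hat_ext_diff_le_segment_integral:
  fixes a b :: "'a::real_normed_vector"
  assumes s: "0 < s" and ab: "norm a < norm b"
  shows "ennreal (hat_ext (norm a / s) - hat_ext (norm b / s))
     \<le> ennreal (norm (b - a)) *
         (\<integral>\<^sup>+t\<in>{0..1}. ennreal (hat_slope s (norm (a + t *\<^sub>R (b - a)))) \<partial>lborel)"
proof -
  define p q where "p = norm a" and "q = norm b"
  have pq: "0 \<le> p" "p < q" using ab by (simp_all add: p_def q_def)
  have "ennreal (hat_ext (p / s) - hat_ext (q / s)) = (\<integral>\<^sup>+r\<in>{p..q}. ennreal (hat_slope s r) \<partial>lborel)"
    using nn_integral_has_integral_lebesgue'[OF _ has_integral_hat_slope[OF s]] pq hat_slope_nonneg[OF s]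
    by simp
  also have "\<dots> = ennreal (q - p) *
      (\<integral>\<^sup>+t. ennreal (hat_slope s (p + (q - p) * t)) * indicator {p..q} (p + (q - p) * t) \<partial>lborel)"
    using nn_integral_real_affine[of "\<lambda>r. ennreal (hat_slope s r) * indicator {p..q} r" "q - p" p] pq
    by simp
  also have "\<dots> \<le> ennreal (norm (b - a)) *
      (\<integral>\<^sup>+t\<in>{0..1}. ennreal (hat_slope s (norm (a + t *\<^sub>R (b - a)))) \<partial>lborel)"
  proof (rule mult_mono)
    show "ennreal (q - p) \<le> ennreal (norm (b - a))"
      using norm_triangle_ineq2[of b a] by (simp add: p_def q_def ennreal_leI)
    show "(\<integral>\<^sup>+t. ennreal (hat_slope s (p + (q - p) * t)) * indicator {p..q} (p + (q - p) * t) \<partial>lborel)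
        \<le> (\<integral>\<^sup>+t\<in>{0..1}. ennreal (hat_slope s (norm (a + t *\<^sub>R (b - a)))) \<partial>lborel)"
    proof (rule nn_integral_mono)
      fix t :: real
      have "0 \<le> (q - p) * t \<longleftrightarrow> 0 \<le> t" "(q - p) * t \<le> q - p \<longleftrightarrow> t \<le> 1"
        using pq by (simp_all add: zero_le_mult_iff mult_le_cancel_left1)
      then have "p + (q - p) * t \<in> {p..q} \<longleftrightarrow> t \<in> {0..1}"
        by auto
      moreover have "hat_slope s (p + (q - p) * t) \<le> hat_slope s (norm (a + t *\<^sub>R (b - a)))"
        if "t \<in> {0..1}"
        using that norm_segment_le[of t a b]
        by (intro hat_slope_antimono[OF s]) (auto simp: p_def q_def algebra_simps)
      ultimately show "ennreal (hat_slope s (p + (q - p) * t)) * indicator {p..q} (p + (q - p) * t)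
          \<le> ennreal (hat_slope s (norm (a + t *\<^sub>R (b - a)))) * indicator {0..1} t"
        by (simp add: indicator_def ennreal_leI)
    qed
  qed simp_all
  finally show ?thesis by (simp add: p_def q_def)
qed

lemma nn_integral_segment_reverse:
  fixes g :: "'a::real_normed_vector \<Rightarrow> ennreal"
  assumes [measurable]: "g \<in> borel_measurable borel"
  shows "(\<integral>\<^sup>+t\<in>{0..1}. g (a + t *\<^sub>R (b - a)) \<partial>lborel)
       = (\<integral>\<^sup>+t\<in>{0..1}. g (b + t *\<^sub>R (a - b)) \<partial>lborel)"
proof -
  have [measurable]: "(\<lambda>t::real. a + t *\<^sub>R (b - a)) \<in> borel_measurable borel"
    by (intro borel_measurable_continuous_onI continuous_intros)
  have "(\<integral>\<^sup>+t\<in>{0..1}. g (a + t *\<^sub>R (b - a)) \<partial>lborel)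
      = (\<integral>\<^sup>+t. g (a + (1 - t) *\<^sub>R (b - a)) * indicator {0..1} (1 - t) \<partial>lborel)"
    using nn_integral_real_affine[of "\<lambda>t. g (a + t *\<^sub>R (b - a)) * indicator {0..1} t" "-1" 1] by simp
  also have "\<dots> = (\<integral>\<^sup>+t\<in>{0..1}. g (b + t *\<^sub>R (a - b)) \<partial>lborel)"
    by (intro nn_integral_cong) (auto simp: indicator_def algebra_simps)
  finally show ?thesis .
qed

lemma abs_hat_ext_diff_le_segment_integral:
  fixes a b :: "'a::real_normed_vector"
  assumes s: "0 < s"
  shows "ennreal \<bar>hat_ext (norm b / s) - hat_ext (norm a / s)\<bar>
     \<le> ennreal (norm (b - a)) *
         (\<integral>\<^sup>+t\<in>{0..1}. ennreal (hat_slope s (norm (a + t *\<^sub>R (b - a)))) \<partial>lborel)"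
proof (cases "norm a" "norm b" rule: linorder_cases)
  case less
  have "hat_ext (norm b / s) \<le> hat_ext (norm a / s)"
    using less s by (intro hat_ext_antimono divide_right_mono) auto
  then show ?thesis
    using hat_ext_diff_le_segment_integral[OF s less] by simp
next
  case equal
  then show ?thesis by simp
next
  case greater
  have "hat_ext (norm a / s) \<le> hat_ext (norm b / s)"
    using greater s by (intro hat_ext_antimono divide_right_mono) auto
  then have "ennreal \<bar>hat_ext (norm b / s) - hat_ext (norm a / s)\<bar>
      \<le> ennreal (norm (a - b)) *
         (\<integral>\<^sup>+t\<in>{0..1}. ennreal (hat_slope s (norm (b + t *\<^sub>R (a - b)))) \<partial>lborel)"
    using hat_ext_diff_le_segment_integral[OF s greater] by simp
  also have "\<dots> = ennreal (norm (b - a)) *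
         (\<integral>\<^sup>+t\<in>{0..1}. ennreal (hat_slope s (norm (a + t *\<^sub>R (b - a)))) \<partial>lborel)"
    using nn_integral_segment_reverse[of "\<lambda>x. ennreal (hat_slope s (norm x))" a b]
    by (simp add: norm_minus_commute)
  finally show ?thesis .
qed

definition ball_volume_density :: "nat \<Rightarrow> real \<Rightarrow> real" where
  "ball_volume_density n r = indicator {0..} r * (n * unit_ball_vol n * r ^ (n - 1))"

lemma has_integral_ball_volume_density:
  assumes "0 < n" "0 \<le> a"
  shows "(ball_volume_density n has_integral unit_ball_vol n * a ^ n) {0..a}"
proof -
  have "((\<lambda>r. n * unit_ball_vol n * r ^ (n - 1)) has_integral
      (\<lambda>r. unit_ball_vol n * r ^ n) a - (\<lambda>r. unit_ball_vol n * r ^ n) 0) {0..a}"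
    by (rule fundamental_theorem_of_calculus)
       (use assms in \<open>auto intro!: derivative_eq_intros
          simp: has_real_derivative_iff_has_vector_derivative[symmetric]\<close>)
  then have "((\<lambda>r. n * unit_ball_vol n * r ^ (n - 1)) has_integral unit_ball_vol n * a ^ n) {0..a}"
    using assms by (simp add: power_0_left)
  then show ?thesis
    by (rule has_integral_eq[rotated]) (simp add: ball_volume_density_def)
qed

lemma distr_norm_lborel:
  "distr (lborel :: 'a::euclidean_space measure) borel norm
     = density lborel (\<lambda>r. ennreal (ball_volume_density DIM('a) r))"
proof (rule measure_eqI_generator_eq[where \<Omega>=UNIV and E="range atMost" and A="\<lambda>i. {..real i}"])
  have sets_borel: "sets (borel :: real measure) = sigma_sets UNIV (range atMost)"
    by (subst borel_eq_atMost) (simp add: sets_measure_of)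
  then show "sets (distr (lborel :: 'a measure) borel norm) = sigma_sets UNIV (range atMost)"
    and "sets (density lborel (\<lambda>r. ennreal (ball_volume_density DIM('a) r))) = sigma_sets UNIV (range atMost)"
    by simp_all
  have distr_atMost: "emeasure (distr (lborel :: 'a measure) borel norm) {..a}
      = ennreal (if 0 \<le> a then unit_ball_vol DIM('a) * a ^ DIM('a) else 0)" for a :: real
  proof -
    have "norm -` {..a} = (cball 0 a :: 'a set)" by auto
    then show ?thesis
      by (subst emeasure_distr) (auto simp: emeasure_cball)
  qed
  have "emeasure (density lborel (\<lambda>r. ennreal (ball_volume_density DIM('a) r))) {..a}
      = ennreal (if 0 \<le> a then unit_ball_vol DIM('a) * a ^ DIM('a) else 0)" for a :: real
  proof -
    have "emeasure (density lborel (\<lambda>r. ennreal (ball_volume_density DIM('a) r))) {..a}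
       = (\<integral>\<^sup>+r\<in>{0..a}. ennreal (ball_volume_density DIM('a) r) \<partial>lborel)"
      by (subst emeasure_density)
         (auto intro!: nn_integral_cong simp: ball_volume_density_def indicator_def)
    also have "\<dots> = ennreal (if 0 \<le> a then unit_ball_vol DIM('a) * a ^ DIM('a) else 0)"
      using nn_integral_has_integral_lebesgue'[OF _ has_integral_ball_volume_density]
      by (cases "0 \<le> a") (auto simp: ball_volume_density_def)
    finally show ?thesis .
  qed
  with distr_atMost show "emeasure (distr (lborel :: 'a measure) borel norm) X
      = emeasure (density lborel (\<lambda>r. ennreal (ball_volume_density DIM('a) r))) X"
    if "X \<in> range atMost" for X
    using that by auto
  show "emeasure (distr (lborel :: 'a measure) borel norm) {..real i} \<noteq> \<infinity>" for i
    using distr_atMost by simp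
qed (auto simp: Int_stable_def intro: real_arch_simple)

lemma nn_integral_lborel_radial:
  fixes f :: "real \<Rightarrow> ennreal"
  assumes [measurable]: "f \<in> borel_measurable borel"
  shows "(\<integral>\<^sup>+(z::'a::euclidean_space). f (norm z) \<partial>lborel)
       = (\<integral>\<^sup>+r. ennreal (ball_volume_density DIM('a) r) * f r \<partial>lborel)"
proof -
  have "(\<integral>\<^sup>+(z::'a). f (norm z) \<partial>lborel) = (\<integral>\<^sup>+r. f r \<partial>distr (lborel :: 'a measure) borel norm)"
    by (subst nn_integral_distr) auto
  also have "\<dots> = (\<integral>\<^sup>+r. ennreal (ball_volume_density DIM('a) r) * f r \<partial>lborel)"
    unfolding distr_norm_lborel by (subst nn_integral_density) (auto simp: ball_volume_density_def)
  finally show ?thesis .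
qed

lemma ball_volume_density_2: "ball_volume_density 2 r = indicator {0..} r * (2 * pi * r)"
  by (simp add: ball_volume_density_def unit_ball_vol_2)

lemma nn_integral_lborel_translate:
  fixes f :: "'a::euclidean_space \<Rightarrow> ennreal"
  assumes [measurable]: "f \<in> borel_measurable borel"
  shows "(\<integral>\<^sup>+z. f (c + z) \<partial>lborel) = (\<integral>\<^sup>+z. f z \<partial>lborel)"
proof -
  have "(\<integral>\<^sup>+z. f z \<partial>lborel) = (\<integral>\<^sup>+z. f z \<partial>distr lborel borel ((+) c))"
    by (simp add: lborel_distr_plus)
  then show ?thesis by (subst (asm) nn_integral_distr) auto
qed

lemma has_integral_hat_slope_radial:
  assumes s: "0 < s"
  shows "((\<lambda>r. 2 * pi * r * hat_slope s r) has_integral 8 * s / 3) {0..s}"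
proof -
  define A where "A r = - (8 * s / 3) * sqrt (1 - (r / s)\<^sup>2) ^ 3" for r
  have "((\<lambda>r. 2 * pi * r * hat_slope s r) has_integral A s - A 0) {0..s}"
  proof (rule fundamental_theorem_of_calculus_interior)
    show "continuous_on {0..s} A" unfolding A_def using s by (intro continuous_intros) auto
    fix r assume r: "r \<in> {0<..<s}"
    define q where "q = sqrt (1 - (r / s)\<^sup>2)"
    have "(r / s)\<^sup>2 < 1" using r s by (simp add: abs_square_less_1)
    then have q: "0 < q" "(r / s)\<^sup>2 = 1 - q\<^sup>2" by (simp_all add: q_def)
    have "((\<lambda>r. sqrt (1 - (r / s)\<^sup>2)) has_real_derivative - r / (s\<^sup>2 * q)) (at r)"
      unfolding q_def using \<open>(r / s)\<^sup>2 < 1\<close> s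
      by (auto intro!: derivative_eq_intros simp: field_simps power2_eq_square)
    from DERIV_cmult[OF DERIV_power[OF this, of 3], of "- (8 * s / 3)"]
    have "(A has_real_derivative - (8 * s / 3) * (3 * q\<^sup>2 * (- r / (s\<^sup>2 * q)))) (at r)"
      by (simp add: A_def[abs_def] q_def)
    moreover have "- (8 * s / 3) * (3 * q\<^sup>2 * (- r / (s\<^sup>2 * q))) = 2 * pi * r * hat_slope s r"
      using q s by (simp add: hat_slope_def q_def field_simps power2_eq_square)
    ultimately show "(A has_vector_derivative 2 * pi * r * hat_slope s r) (at r)"
      by (simp add: has_real_derivative_iff_has_vector_derivative)
  qed (use s in auto)
  moreover have "A s - A 0 = 8 * s / 3" using s by (simp add: A_def)
  ultimately show ?thesis by simp
qed

lemma nn_integral_hat_slope_2: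
  assumes s: "0 < s"
  shows "(\<integral>\<^sup>+(z::real^2). ennreal (hat_slope s (norm z)) \<partial>lborel) = ennreal (8 * s / 3)"
proof -
  have "(\<integral>\<^sup>+(z::real^2). ennreal (hat_slope s (norm z)) \<partial>lborel)
      = (\<integral>\<^sup>+r. ennreal (indicator {0..} r * (2 * pi * r)) * ennreal (hat_slope s r) \<partial>lborel)"
    by (subst nn_integral_lborel_radial) (auto simp: ball_volume_density_2)
  also have "\<dots> = (\<integral>\<^sup>+r\<in>{0..s}. ennreal (2 * pi * r * hat_slope s r) \<partial>lborel)"
    using hat_slope_eq_0[OF s] hat_slope_nonneg[OF s]
    by (intro nn_integral_cong) (auto simp: indicator_def ennreal_mult)
  also have "\<dots> = ennreal (8 * s / 3)"
    using nn_integral_has_integral_lebesgue'[OF _ has_integral_hat_slope_radial[OF s]]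
      hat_slope_nonneg[OF s] by simp
  finally show ?thesis .
qed

definition hat_moment_primitive :: "real \<Rightarrow> real" where
  "hat_moment_primitive w = w ^ 3 / 3 * hat_formula w
     + 4 / (3 * pi) * (sqrt (1 - w\<^sup>2) ^ 5 / 5 - sqrt (1 - w\<^sup>2) ^ 3 / 3)"

lemma hat_moment_primitive_has_real_derivative:
  assumes "0 < w" "w < 1"
  shows "(hat_moment_primitive has_real_derivative w\<^sup>2 * hat_formula w) (at w)"
proof -
  define q where "q = sqrt (1 - w\<^sup>2)"
  have "w\<^sup>2 < 1" using assms by (simp add: abs_square_less_1)
  then have q: "0 < q" "w\<^sup>2 = 1 - q\<^sup>2" by (simp_all add: q_def)
  show ?thesis
    unfolding hat_moment_primitive_def using assms \<open>w\<^sup>2 < 1\<close>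
    by (auto intro!: derivative_eq_intros simp: q_def[symmetric])
       (use q in \<open>simp add: field_simps power2_eq_square power3_eq_cube power4_eq_xxxx; algebra\<close>)
qed

lemma has_integral_hat_moment_radial:
  assumes t: "0 < t"
  shows "((\<lambda>r. 2 * pi * r * (hat_ext (r / t) * r)) has_integral 16 / 45 * t ^ 3) {0..t}"
proof -
  define G where "G r = 2 * pi * t ^ 3 * hat_moment_primitive (r / t)" for r
  have "((\<lambda>r. 2 * pi * r * (hat_ext (r / t) * r)) has_integral G t - G 0) {0..t}"
  proof (rule fundamental_theorem_of_calculus_interior)
    have "continuous_on {0..1} hat_moment_primitive"
      unfolding hat_moment_primitive_def
      by (intro continuous_intros continuous_on_subset[OF continuous_on_hat_formula]) auto
    then have "continuous_on {0..t} (\<lambda>r. hat_moment_primitive (r / t))"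
      by (rule continuous_on_compose2) (use t in \<open>auto intro!: continuous_intros\<close>)
    then show "continuous_on {0..t} G"
      unfolding G_def by (intro continuous_intros)
    fix r assume "r \<in> {0<..<t}"
    then have w: "0 < r / t" "r / t < 1" using t by auto
    have "(G has_real_derivative 2 * pi * t ^ 3 * ((r / t)\<^sup>2 * hat_formula (r / t) * (1 / t))) (at r)"
      unfolding G_def using t
      by (intro DERIV_cmult DERIV_chain2[where g = "\<lambda>r. r / t" and x = r,
            OF hat_moment_primitive_has_real_derivative[OF w]] derivative_eq_intros) auto
    moreover have "hat_ext (r / t) = hat_formula (r / t)" using w by (simp add: hat_ext_def)
    ultimately show "(G has_vector_derivative 2 * pi * r * (hat_ext (r / t) * r)) (at r)"
      using t by (simp add: has_real_derivative_iff_has_vector_derivative field_simps power2_eq_square power3_eq_cube)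
  qed (use t in auto)
  moreover have "G t - G 0 = 16 / 45 * t ^ 3"
    using t by (simp add: G_def hat_moment_primitive_def hat_formula_def)
  ultimately show ?thesis by simp
qed

lemma nn_integral_hat_moment_2:
  assumes t: "0 < t"
  shows "(\<integral>\<^sup>+(y::real^2). ennreal (hat_ext (norm y / t) * norm y) \<partial>lborel) = ennreal (16 / 45 * t ^ 3)"
proof -
  have "(\<integral>\<^sup>+(y::real^2). ennreal (hat_ext (norm y / t) * norm y) \<partial>lborel)
      = (\<integral>\<^sup>+r. ennreal (indicator {0..} r * (2 * pi * r)) * ennreal (hat_ext (r / t) * r) \<partial>lborel)"
    by (subst nn_integral_lborel_radial) (auto simp: ball_volume_density_2)
  also have "\<dots> = (\<integral>\<^sup>+r\<in>{0..t}. ennreal (2 * pi * r * (hat_ext (r / t) * r)) \<partial>lborel)"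
    using t hat_ext_nonneg
    by (intro nn_integral_cong) (auto simp: indicator_def ennreal_mult hat_ext_eq_0)
  also have "\<dots> = ennreal (16 / 45 * t ^ 3)"
    using nn_integral_has_integral_lebesgue'[OF _ has_integral_hat_moment_radial[OF t]] hat_ext_nonneg
    by simp
  finally show ?thesis .
qed

lemma nn_integral_hat_ext_difference_le:
  fixes y :: "'a::euclidean_space"
  assumes s: "0 < s"
  shows "(\<integral>\<^sup>+z. ennreal \<bar>hat_ext (norm (z + y) / s) - hat_ext (norm z / s)\<bar> \<partial>lborel)
       \<le> ennreal (norm y) * (\<integral>\<^sup>+(z::'a). ennreal (hat_slope s (norm z)) \<partial>lborel)"
proof -
  define g where "g z t = ennreal (hat_slope s (norm (z + t *\<^sub>R y))) * indicator {0..1} t"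
    for z :: 'a and t :: real
  have [measurable]: "case_prod g \<in> borel_measurable (lborel \<Otimes>\<^sub>M lborel)"
    unfolding g_def by measurable
  have "(\<integral>\<^sup>+z. ennreal \<bar>hat_ext (norm (z + y) / s) - hat_ext (norm z / s)\<bar> \<partial>lborel)
      \<le> (\<integral>\<^sup>+z. ennreal (norm y) * (\<integral>\<^sup>+t. g z t \<partial>lborel) \<partial>lborel)"
  proof (rule nn_integral_mono)
    fix z :: 'a
    show "ennreal \<bar>hat_ext (norm (z + y) / s) - hat_ext (norm z / s)\<bar>
        \<le> ennreal (norm y) * (\<integral>\<^sup>+t. g z t \<partial>lborel)"
      using abs_hat_ext_diff_le_segment_integral[OF s, of "z + y" z] by (simp add: g_def)
  qed
  also have "\<dots> = ennreal (norm y) * (\<integral>\<^sup>+z. (\<integral>\<^sup>+t. g z t \<partial>lborel) \<partial>lborel)"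
    by (rule nn_integral_cmult) measurable
  also have "(\<integral>\<^sup>+z. (\<integral>\<^sup>+t. g z t \<partial>lborel) \<partial>lborel) = (\<integral>\<^sup>+t. (\<integral>\<^sup>+z. g z t \<partial>lborel) \<partial>lborel)"
    by (rule lborel_pair.Fubini') measurable
  also have "(\<integral>\<^sup>+t. (\<integral>\<^sup>+z. g z t \<partial>lborel) \<partial>lborel)
      = (\<integral>\<^sup>+(t::real)\<in>{0..1}. (\<integral>\<^sup>+(z::'a). ennreal (hat_slope s (norm z)) \<partial>lborel) \<partial>lborel)"
  proof -
    have "(\<integral>\<^sup>+z. ennreal (hat_slope s (norm (z + t *\<^sub>R y))) \<partial>lborel)
        = (\<integral>\<^sup>+(z::'a). ennreal (hat_slope s (norm z)) \<partial>lborel)" for t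
      using nn_integral_lborel_translate[of "\<lambda>z. ennreal (hat_slope s (norm z))" "t *\<^sub>R y"]
      by (simp add: add.commute)
    then show ?thesis by (simp add: g_def nn_integral_multc)
  qed
  also have "\<dots> = (\<integral>\<^sup>+(z::'a). ennreal (hat_slope s (norm z)) \<partial>lborel)"
    by (simp add: nn_integral_cmult_indicator)
  finally show ?thesis .
qed

lemma nn_integral_hat_ext_difference_le_2:
  fixes y :: "real^2"
  assumes s: "0 < s"
  shows "(\<integral>\<^sup>+z. ennreal \<bar>hat_ext (norm (z + y) / s) - hat_ext (norm z / s)\<bar> \<partial>lborel)
       \<le> ennreal (norm y) * ennreal (8 * s / 3)"
  using nn_integral_hat_ext_difference_le[OF s, of y] by (simp add: nn_integral_hat_slope_2[OF s])

lemma nn_integral_lborel_pair_shift: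
  fixes F :: "'a::euclidean_space \<Rightarrow> 'a \<Rightarrow> ennreal"
  assumes F[measurable]: "case_prod F \<in> borel_measurable (lborel \<Otimes>\<^sub>M lborel)"
  shows "(\<integral>\<^sup>+p. F (fst p) (snd p) \<partial>(lborel \<Otimes>\<^sub>M lborel))
       = (\<integral>\<^sup>+y. (\<integral>\<^sup>+z. F (c + z + y) (c + z) \<partial>lborel) \<partial>lborel)"
proof -
  have [measurable]: "(\<lambda>(y, x). F (x + y) x) \<in> borel_measurable (lborel \<Otimes>\<^sub>M lborel)"
    using measurable_compose[OF _ F, of "\<lambda>(y, x). (x + y, x)"] by (simp add: case_prod_beta')
  have "(\<integral>\<^sup>+p. F (fst p) (snd p) \<partial>(lborel \<Otimes>\<^sub>M lborel)) = (\<integral>\<^sup>+x. (\<integral>\<^sup>+x'. F x' x \<partial>lborel) \<partial>lborel)"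
    using lborel_pair.nn_integral_snd[of "case_prod F"] by (simp add: case_prod_beta')
  also have "\<dots> = (\<integral>\<^sup>+x. (\<integral>\<^sup>+y. F (x + y) x \<partial>lborel) \<partial>lborel)"
    by (intro nn_integral_cong nn_integral_lborel_translate[symmetric]) measurable
  also have "\<dots> = (\<integral>\<^sup>+y. (\<integral>\<^sup>+x. F (x + y) x \<partial>lborel) \<partial>lborel)"
    by (rule lborel_pair.Fubini') measurable
  also have "\<dots> = (\<integral>\<^sup>+y. (\<integral>\<^sup>+z. F (c + z + y) (c + z) \<partial>lborel) \<partial>lborel)"
    by (intro nn_integral_cong nn_integral_lborel_translate[symmetric]) measurable
  finally show ?thesis .
qed

lemma abs_hat_Delta_eq:
  assumes "0 < s" "0 < s'"
  shows "ennreal \<bar>hat_Delta s s' x0 x1 x2\<bar>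
       = ennreal \<bar>hat_ext (norm (x1 - x0) / s) - hat_ext (norm (x2 - x0) / s)\<bar>
           * ennreal (hat_ext (norm (x1 - x2) / s'))"
  unfolding hat_Delta_def using assms
  by (simp add: euclid_hat_eq_hat_ext abs_mult hat_ext_nonneg norm_minus_commute ennreal_mult)

theorem mainTheorem15:
  fixes s s' :: real and x0 :: "real^2"
  assumes "0 < s'" and "s' < s"
  shows "(\<integral>\<^sup>+ p. ennreal \<bar>hat_Delta s s' x0 (fst p) (snd p)\<bar> \<partial>(lborel \<Otimes>\<^sub>M lborel))
           \<le> ennreal (pi\<^sup>2 / 8 * s' ^ 3 * s)"
proof -
  have s: "0 < s" using assms by simp
  have "(\<integral>\<^sup>+ p. ennreal \<bar>hat_Delta s s' x0 (fst p) (snd p)\<bar> \<partial>(lborel \<Otimes>\<^sub>M lborel))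
      = (\<integral>\<^sup>+(y::real^2). (\<integral>\<^sup>+z. ennreal \<bar>hat_ext (norm (z + y) / s) - hat_ext (norm z / s)\<bar>
           * ennreal (hat_ext (norm y / s')) \<partial>lborel) \<partial>lborel)"
    using s assms(1) by (subst nn_integral_lborel_pair_shift[where c = x0])
      (simp_all add: abs_hat_Delta_eq add.assoc)
  also have "\<dots> \<le> (\<integral>\<^sup>+(y::real^2). ennreal (hat_ext (norm y / s') * norm y)
      * ennreal (8 * s / 3) \<partial>lborel)"
  proof (rule nn_integral_mono)
    fix y :: "real^2"
    show "(\<integral>\<^sup>+z. ennreal \<bar>hat_ext (norm (z + y) / s) - hat_ext (norm z / s)\<bar>
           * ennreal (hat_ext (norm y / s')) \<partial>lborel)
        \<le> ennreal (hat_ext (norm y / s') * norm y) * ennreal (8 * s / 3)"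
      using mult_right_mono[OF nn_integral_hat_ext_difference_le_2[OF s, of y],
          of "ennreal (hat_ext (norm y / s'))"]
      by (simp add: nn_integral_multc nn_integral_cmult ennreal_mult hat_ext_nonneg mult_ac)
  qed
  also have "\<dots> = ennreal (16 / 45 * s' ^ 3 * (8 * s / 3))"
    using s assms(1) by (simp add: nn_integral_multc nn_integral_hat_moment_2 ennreal_mult[symmetric])
  also have "\<dots> \<le> ennreal (pi\<^sup>2 / 8 * s' ^ 3 * s)"
  proof (rule ennreal_leI)
    have "128 / 135 \<le> pi\<^sup>2 / 8"
      using pi_gt3 power_strict_mono[of 3 pi 2] by simp
    then show "16 / 45 * s' ^ 3 * (8 * s / 3) \<le> pi\<^sup>2 / 8 * s' ^ 3 * s"
      using s assms(1) by (simp add: mult_right_mono)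
  qed
  finally show ?thesis .
qed

end
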